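(* Assume the general coarsening setting described in the context. Then CAR(GCMP) holds if and only if CAR(REL) holds, where: CAR(GCMP) means that for all $(\theta,\psi)$ the random variable $\mathcal{L}^{\psi/\psi_0}_{\mathcal{R}|\mathcal{X}}$ is $\mathcal{O}$-measurable; and CAR(REL) means that for all $\psi$ there is a version $(r,x)\mapsto\mathcal{L}^{\psi/\psi_0}_{\mathcal{R}|\mathcal{X}}(r,x)$ (a measurable function of the paths of $(R,X)$) such that for every path $r$ of $R$ and all paths $x,x'$ of $X$ with $rx=rx'$ (i.e. $r_tx_t=r_tx'_t$ for all $t$) one has $\mathcal{L}^{\psi/\psi_0}_{\mathcal{R}|\mathcal{X}}(r,x)=\mathcal{L}^{\psi/\psi_0}_{\mathcal{R}|\mathcal{X}}(r,x')$.
   Context: Setting. On a measurable space $(\Omega,\mathcal{F})$ live two càdlàg stochastic processes: $X=(X_t)_{t\ge0}$ with values in $\mathbb{R}^d$ (path space a Skorohod space with its Borel $\sigma$-field) and a response indicator process $R=(R_t)_{t\ge0}$ with values in $\{0,1\}$ (componentwise), $R_t=1$ meaning $X_t$ is observed. Let $\mathcal{X}=\sigma(X_t,t\ge0)$, $\mathcal{R}=\sigma(R_t,t\ge0)$, $\mathcal{F}=\mathcal{X}\vee\mathcal{R}$. A model is a family $\{P_{(\theta,\psi)}:(\theta,\psi)\in\Theta\times\Psi\}$ of mutually equivalent probability measures on $\mathcal{F}$ with reference measure $P_{(\theta_0,\psi_0)}$; the restriction of $P_{(\theta,\psi)}$ to $\mathcal{X}$ depends only on $\theta$. Non-informativeness: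 $P_{(\theta_1,\psi)}(A\mid\mathcal{X})=P_{(\theta_2,\psi)}(A\mid\mathcal{X})$ a.s. for all $A\in\mathcal{R}$, all $\theta_1,\theta_2,\psi$. For a sub-$\sigma$-field $\mathcal{G}$, $\mathcal{L}^{(\theta,\psi)/(\theta_0,\psi_0)}_{\mathcal{G}}$ is the Radon–Nikodym derivative $dP_{(\theta,\psi)}/dP_{(\theta_0,\psi_0)}$ restricted to $\mathcal{G}$. The conditional likelihood ratio of $\mathcal{Y}$ given $\mathcal{G}$ is the $\mathcal{G}\vee\mathcal{Y}$-measurable variable $\mathcal{L}_{\mathcal{Y}|\mathcal{G}}=\mathcal{L}_{\mathcal{G}\vee\mathcal{Y}}/\mathcal{L}_{\mathcal{G}}$ (it satisfies $E_{(\theta,\psi)}[1_A\mid\mathcal{G}]=E_{(\theta_0,\psi_0)}[1_A\mathcal{L}_{\mathcal{Y}|\mathcal{G}}\mid\mathcal{G}]$ for $A\in\mathcal{Y}$). By non-informativeness $\mathcal{L}^{(\theta,\psi)/(\theta_0,\psi_0)}_{\mathcal{R}|\mathcal{X}}$ does not depend on $\theta$ and is denoted $\mathcal{L}^{\psi/\psi_0}_{\mathcal{R}|\mathcal{X}}$. The observed $\sigma$-field is $\mathcal{O}=\sigma(R_tX_t,R_t,\ t\ge0)$. *)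

theory Defs
  imports "HOL-Probability.Probability"
begin

text \<open>Cadlag paths on the time axis [0,oo). Paths are represented as functions on all
  of real, normalised to the value 0 at negative times.\<close>
definition cadlag :: "(real \<Rightarrow> 'a::topological_space) \<Rightarrow> bool" where
  "cadlag f \<longleftrightarrow> (\<forall>t\<ge>0. continuous (at_right t) f) \<and> (\<forall>t>0. \<exists>l. (f \<longlongrightarrow> l) (at_left t))"

definition cadlag_paths :: "'a set \<Rightarrow> (real \<Rightarrow> 'a::{topological_space,zero}) set" where
  "cadlag_paths S = {f. cadlag f \<and> (\<forall>t\<ge>0. f t \<in> S) \<and> (\<forall>t<0. f t = 0)}"

text \<open>Path space: cadlag paths with the sigma-field generated by the coordinate maps
  (which coincides with the Borel sigma-field of the Skorohod topology).\<close>
definition path_space :: "'a set \<Rightarrow> (real \<Rightarrow> 'a::{topological_space,zero}) measure" where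
  "path_space S = restrict_space (Pi\<^sub>M UNIV (\<lambda>_. borel)) (cadlag_paths S)"

definition binvals :: "(real ^ 'd) set" where
  "binvals = {v. \<forall>i. v $ i = 0 \<or> v $ i = 1}"

definition gen_sigma :: "'w set \<Rightarrow> ('w \<Rightarrow> 'a::topological_space) set \<Rightarrow> 'w measure" where
  "gen_sigma \<Omega> Fs = sigma \<Omega> {f -` A \<inter> \<Omega> | f A. f \<in> Fs \<and> A \<in> sets borel}"

definition sigma_X :: "'w set \<Rightarrow> ('w \<Rightarrow> real \<Rightarrow> real ^ 'd) \<Rightarrow> 'w measure" where
  "sigma_X \<Omega> X = gen_sigma \<Omega> {(\<lambda>\<omega>. X \<omega> t) | t. 0 \<le> t}"

definition sigma_R :: "'w set \<Rightarrow> ('w \<Rightarrow> real \<Rightarrow> real ^ 'd) \<Rightarrow> 'w measure" where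
  "sigma_R \<Omega> R = gen_sigma \<Omega> {(\<lambda>\<omega>. R \<omega> t) | t. 0 \<le> t}"

definition sigma_F :: "'w set \<Rightarrow> ('w \<Rightarrow> real \<Rightarrow> real ^ 'd) \<Rightarrow> ('w \<Rightarrow> real \<Rightarrow> real ^ 'd) \<Rightarrow> 'w measure" where
  "sigma_F \<Omega> X R = gen_sigma \<Omega> ({(\<lambda>\<omega>. X \<omega> t) | t. 0 \<le> t} \<union> {(\<lambda>\<omega>. R \<omega> t) | t. 0 \<le> t})"

definition sigma_O :: "'w set \<Rightarrow> ('w \<Rightarrow> real \<Rightarrow> real ^ 'd) \<Rightarrow> ('w \<Rightarrow> real \<Rightarrow> real ^ 'd) \<Rightarrow> 'w measure" where
  "sigma_O \<Omega> X R = gen_sigma \<Omega> ({(\<lambda>\<omega>. R \<omega> t * X \<omega> t) | t. 0 \<le> t} \<union> {(\<lambda>\<omega>. R \<omega> t) | t. 0 \<le> t})"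

definition restr_measure :: "'w measure \<Rightarrow> 'w measure \<Rightarrow> 'w measure" where
  "restr_measure M G = measure_of (space M) (sets G) (emeasure M)"

definition lik_ratio :: "'w measure \<Rightarrow> 'w measure \<Rightarrow> 'w measure \<Rightarrow> 'w \<Rightarrow> real" where
  "lik_ratio P P0 G = (\<lambda>\<omega>. enn2real (RN_deriv (restr_measure P0 G) (restr_measure P G) \<omega>))"

definition cond_lik_ratio :: "'w measure \<Rightarrow> 'w measure \<Rightarrow> 'w measure \<Rightarrow> 'w measure \<Rightarrow> 'w \<Rightarrow> real" where
  "cond_lik_ratio P P0 G GY = (\<lambda>\<omega>. lik_ratio P P0 GY \<omega> / lik_ratio P P0 G \<omega>)"

end

theory Submission imports Defs begin

text \<open>The observed \<sigma>-field is generated by the single path-valued map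
  \<open>\<omega> \<mapsto> (R \<omega>, R \<omega> X \<omega>)\<close>, i.e. by \<open>coarsen \<circ> (R, X)\<close> with \<open>coarsen (r, x) = (r, r x)\<close>. By the
  Doob--Dynkin lemma a random variable is \<open>\<O>\<close>-measurable iff it is \<open>h \<circ> coarsen \<circ> (R, X)\<close> for a
  measurable \<open>h\<close>; since \<open>r\<close> is 0/1-valued, \<open>coarsen\<close> is idempotent, so \<open>g = h \<circ> coarsen\<close> is exactly a
  measurable function of the paths of \<open>(R, X)\<close> that only depends on \<open>(r, r x)\<close>. Nothing about
  likelihood ratios is used: the equivalence holds for every real random variable.\<close>

lemma vimage_algebra_factor_ennreal:
  assumes T: "T \<in> \<Omega> \<rightarrow> space M" and u: "u \<in> borel_measurable (vimage_algebra \<Omega> T M)"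
  shows "\<exists>h\<in>borel_measurable M. \<forall>\<omega>\<in>\<Omega>. u \<omega> = (h (T \<omega>) :: ennreal)"
  using u
proof (induct rule: borel_measurable_induct)
  case (cong f g)
  then show ?case by auto
next
  case (set A)
  then obtain B where B: "B \<in> sets M" "A = T -` B \<inter> \<Omega>"
    using sets_vimage_algebra2[OF T] by auto
  show ?case
    by (rule bexI[where x="indicator B"]) (use B in \<open>auto simp: indicator_def\<close>)
next
  case (mult u c)
  then obtain h where "h \<in> borel_measurable M" "\<forall>\<omega>\<in>\<Omega>. u \<omega> = h (T \<omega>)" by blast
  then show ?case
    by (intro bexI[where x="\<lambda>y. c * h y"]) simp_all
next
  case (add u v)
  then obtain h k where "h \<in> borel_measurable M" "\<forall>\<omega>\<in>\<Omega>. u \<omega> = h (T \<omega>)"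
    and "k \<in> borel_measurable M" "\<forall>\<omega>\<in>\<Omega>. v \<omega> = k (T \<omega>)" by blast
  then show ?case
    by (intro bexI[where x="\<lambda>y. k y + h y"]) simp_all
next
  case (seq U)
  then have "\<forall>i. \<exists>h\<in>borel_measurable M. \<forall>\<omega>\<in>\<Omega>. U i \<omega> = h (T \<omega>)" by blast
  then obtain h where "\<And>i. h i \<in> borel_measurable M" "\<And>i \<omega>. \<omega> \<in> \<Omega> \<Longrightarrow> U i \<omega> = h i (T \<omega>)"
    by metis
  then show ?case
    by (intro bexI[where x="\<lambda>y. SUP i. h i y"]) (simp_all add: image_image)
qed

lemma vimage_algebra_factor_real:
  assumes T: "T \<in> \<Omega> \<rightarrow> space M" and f: "f \<in> borel_measurable (vimage_algebra \<Omega> T M)"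
  shows "\<exists>h\<in>borel_measurable M. \<forall>\<omega>\<in>\<Omega>. f \<omega> = (h (T \<omega>) :: real)"
proof -
  have "(\<lambda>\<omega>. ennreal (f \<omega>)) \<in> borel_measurable (vimage_algebra \<Omega> T M)"
    and "(\<lambda>\<omega>. ennreal (- f \<omega>)) \<in> borel_measurable (vimage_algebra \<Omega> T M)"
    using f by simp_all
  from this[THEN vimage_algebra_factor_ennreal[OF T]]
  obtain hpos hneg where hpos: "hpos \<in> borel_measurable M" "\<forall>\<omega>\<in>\<Omega>. ennreal (f \<omega>) = hpos (T \<omega>)"
    and hneg: "hneg \<in> borel_measurable M" "\<forall>\<omega>\<in>\<Omega>. ennreal (- f \<omega>) = hneg (T \<omega>)"
    by blast
  show ?thesis
  proof (rule bexI[where x="\<lambda>y. enn2real (hpos y) - enn2real (hneg y)"])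
    show "(\<lambda>y. enn2real (hpos y) - enn2real (hneg y)) \<in> borel_measurable M"
      using hpos(1) hneg(1) by measurable
    show "\<forall>\<omega>\<in>\<Omega>. f \<omega> = enn2real (hpos (T \<omega>)) - enn2real (hneg (T \<omega>))"
    proof
      fix \<omega> assume "\<omega> \<in> \<Omega>"
      then have "hpos (T \<omega>) = ennreal (f \<omega>)" "hneg (T \<omega>) = ennreal (- f \<omega>)"
        using hpos(2) hneg(2) by auto
      then show "f \<omega> = enn2real (hpos (T \<omega>)) - enn2real (hneg (T \<omega>))"
        by (cases "f \<omega> \<ge> 0") (auto simp: ennreal_neg)
    qed
  qed
qed

lemma tendsto_vec_mult:
  fixes f g :: "'a \<Rightarrow> real ^ 'd::finite"
  shows "(f \<longlongrightarrow> a) F \<Longrightarrow> (g \<longlongrightarrow> b) F \<Longrightarrow> ((\<lambda>t. f t * g t) \<longlongrightarrow> a * b) F"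
  unfolding times_vec_def by (intro tendsto_intros)

lemma borel_measurable_vec_mult:
  fixes a b :: "'w \<Rightarrow> real ^ 'd::finite"
  assumes "a \<in> borel_measurable M" "b \<in> borel_measurable M"
  shows "(\<lambda>\<omega>. a \<omega> * b \<omega>) \<in> borel_measurable M"
  by (rule borel_measurable_continuous_Pair[OF assms]) (unfold times_vec_def, intro continuous_intros)

lemma cadlag_vec_mult:
  fixes f g :: "real \<Rightarrow> real ^ 'd::finite"
  assumes "cadlag f" "cadlag g"
  shows "cadlag (\<lambda>t. f t * g t)"
  unfolding cadlag_def
proof safe
  fix t :: real assume "0 \<le> t"
  then have "continuous (at_right t) f" "continuous (at_right t) g"
    using assms by (auto simp: cadlag_def)
  then show "continuous (at_right t) (\<lambda>t. f t * g t)"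
    unfolding continuous_def by (rule tendsto_vec_mult)
next
  fix t :: real assume "0 < t"
  then obtain l m where "(f \<longlongrightarrow> l) (at_left t)" "(g \<longlongrightarrow> m) (at_left t)"
    using assms unfolding cadlag_def by blast
  then show "\<exists>l. ((\<lambda>t. f t * g t) \<longlongrightarrow> l) (at_left t)"
    by (blast intro: tendsto_vec_mult)
qed

lemma space_path_space: "space (path_space S) = cadlag_paths S"
  by (auto simp: path_space_def space_restrict_space space_PiM)

lemma measurable_path_space:
  assumes "\<And>t. (\<lambda>\<omega>. F \<omega> t) \<in> borel_measurable M"
    and "\<And>\<omega>. \<omega> \<in> space M \<Longrightarrow> F \<omega> \<in> cadlag_paths S"
  shows "F \<in> measurable M (path_space S)"
  unfolding path_space_def
proof (rule measurable_restrict_space2)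
  show "F \<in> space M \<rightarrow> cadlag_paths S" using assms(2) by auto
  have "(\<lambda>\<omega> t. F \<omega> t) \<in> measurable M (Pi\<^sub>M UNIV (\<lambda>_. borel))"
    by (rule measurable_PiM_single') (use assms(1) in auto)
  then show "F \<in> measurable M (Pi\<^sub>M UNIV (\<lambda>_. borel))" by simp
qed

lemma measurable_path_space_coord: "(\<lambda>x. x t) \<in> borel_measurable (path_space S)"
  unfolding path_space_def
  by (rule measurable_restrict_space1) (rule measurable_component_singleton, simp)

abbreviation RX_paths :: "((real \<Rightarrow> real ^ 'd::finite) \<times> (real \<Rightarrow> real ^ 'd)) measure" where
  "RX_paths \<equiv> path_space binvals \<Otimes>\<^sub>M path_space UNIV"

definition coarsen :: "(real \<Rightarrow> real ^ 'd::finite) \<times> (real \<Rightarrow> real ^ 'd) \<Rightarrow>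
    (real \<Rightarrow> real ^ 'd) \<times> (real \<Rightarrow> real ^ 'd)" where
  "coarsen p = (fst p, \<lambda>t. fst p t * snd p t)"

lemma coarsen_Pair [simp]: "coarsen (r, x) = (r, \<lambda>t. r t * x t)"
  by (simp add: coarsen_def)

definition depends_on_observed :: "((real \<Rightarrow> real ^ 'd::finite) \<times> (real \<Rightarrow> real ^ 'd) \<Rightarrow> 'b) \<Rightarrow> bool" where
  "depends_on_observed g \<longleftrightarrow>
     (\<forall>r \<in> cadlag_paths binvals. \<forall>x \<in> cadlag_paths UNIV. \<forall>x' \<in> cadlag_paths UNIV.
        (\<forall>t\<ge>0. r t * x t = r t * x' t) \<longrightarrow> g (r, x) = g (r, x'))"

lemma space_RX_paths:
  "p \<in> space RX_paths \<longleftrightarrow> fst p \<in> cadlag_paths binvals \<and> snd p \<in> cadlag_paths UNIV"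
  by (cases p) (simp add: space_pair_measure space_path_space)

lemma coarsen_in_space_RX_paths: "p \<in> space RX_paths \<Longrightarrow> coarsen p \<in> space RX_paths"
  by (auto simp: space_RX_paths coarsen_def cadlag_paths_def intro: cadlag_vec_mult)

lemma coarsen_eq_iff:
  assumes "r \<in> cadlag_paths S"
  shows "coarsen (r, x) = coarsen (r, x') \<longleftrightarrow> (\<forall>t\<ge>0. r t * x t = r t * x' t)"
proof -
  have "r t * x t = r t * x' t" if "t < 0" for t
    using assms that by (simp add: cadlag_paths_def)
  then show ?thesis
    by (auto simp: coarsen_def fun_eq_iff) (meson not_le)
qed

lemma binvals_mult_idem: "v \<in> binvals \<Longrightarrow> v * (v * x) = v * x"
  unfolding binvals_def by (auto simp: times_vec_def vec_eq_iff)

lemma coarsen_idem: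
  assumes "fst p \<in> cadlag_paths binvals"
  shows "coarsen (coarsen p) = coarsen p"
proof -
  have "fst p t * (fst p t * snd p t) = fst p t * snd p t" for t
    using assms by (cases "0 \<le> t") (auto simp: cadlag_paths_def binvals_mult_idem)
  then show ?thesis by (simp add: coarsen_def)
qed

lemma measurable_RX_paths_coord:
  "(\<lambda>p. fst p t) \<in> borel_measurable RX_paths" "(\<lambda>p. snd p t) \<in> borel_measurable RX_paths"
  by (rule measurable_compose[OF measurable_fst measurable_path_space_coord]
      measurable_compose[OF measurable_snd measurable_path_space_coord])+

lemma measurable_coarsen: "coarsen \<in> measurable RX_paths RX_paths"
  unfolding coarsen_def
proof (rule measurable_Pair)
  show "(\<lambda>p t. fst p t * snd p t) \<in> measurable RX_paths (path_space UNIV)"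
    by (rule measurable_path_space)
      (auto simp: space_RX_paths cadlag_paths_def measurable_RX_paths_coord
        intro: borel_measurable_vec_mult cadlag_vec_mult)
qed simp

lemma depends_on_observed_iff_coarsen:
  fixes g :: "(real \<Rightarrow> real ^ 'd::finite) \<times> (real \<Rightarrow> real ^ 'd) \<Rightarrow> 'b"
  shows "depends_on_observed g \<longleftrightarrow> (\<forall>p \<in> space RX_paths. g (coarsen p) = g p)"
proof
  assume g: "depends_on_observed g"
  show "\<forall>p \<in> space RX_paths. g (coarsen p) = g p"
  proof
    fix p :: "(real \<Rightarrow> real ^ 'd) \<times> (real \<Rightarrow> real ^ 'd)"
    assume p: "p \<in> space RX_paths"
    obtain r x where p_eq: "p = (r, x)" by (cases p)
    have r: "r \<in> cadlag_paths binvals" and x: "x \<in> cadlag_paths UNIV"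
      using p by (simp_all add: p_eq space_RX_paths)
    have rx: "(\<lambda>t. r t * x t) \<in> cadlag_paths UNIV"
      using coarsen_in_space_RX_paths[OF p] by (simp add: p_eq space_RX_paths)
    have "coarsen (r, \<lambda>t. r t * x t) = coarsen (r, x)"
      using coarsen_idem[of "(r, x)"] r by simp
    then have "g (r, \<lambda>t. r t * x t) = g (r, x)"
      using g r x rx coarsen_eq_iff[OF r] unfolding depends_on_observed_def by blast
    then show "g (coarsen p) = g p" by (simp add: p_eq)
  qed
next
  assume g: "\<forall>p \<in> space RX_paths. g (coarsen p) = g p"
  show "depends_on_observed g"
    unfolding depends_on_observed_def
  proof (intro ballI impI)
    fix r x x' :: "real \<Rightarrow> real ^ 'd"
    assume r: "r \<in> cadlag_paths binvals" and "x \<in> cadlag_paths UNIV" "x' \<in> cadlag_paths UNIV"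
      and "\<forall>t\<ge>0. r t * x t = r t * x' t"
    then have "(r, x) \<in> space RX_paths" "(r, x') \<in> space RX_paths" "coarsen (r, x) = coarsen (r, x')"
      using coarsen_eq_iff[OF r] by (simp_all add: space_RX_paths)
    then show "g (r, x) = g (r, x')" using g by metis
  qed
qed

lemma space_gen_sigma: "space (gen_sigma \<Omega> Fs) = \<Omega>"
  unfolding gen_sigma_def by (rule space_measure_of) auto

lemma sets_gen_sigma:
  "sets (gen_sigma \<Omega> Fs) = sigma_sets \<Omega> {f -` A \<inter> \<Omega> | f A. f \<in> Fs \<and> A \<in> sets borel}"
  unfolding gen_sigma_def by (rule sets_measure_of) auto

lemma measurable_gen_sigma:
  assumes "f \<in> Fs"
  shows "f \<in> borel_measurable (gen_sigma \<Omega> Fs)"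
proof (rule measurableI)
  fix A :: "'b set" assume "A \<in> sets borel"
  then show "f -` A \<inter> space (gen_sigma \<Omega> Fs) \<in> sets (gen_sigma \<Omega> Fs)"
    using assms unfolding space_gen_sigma sets_gen_sigma by (intro sigma_sets.Basic) blast
qed simp

lemma space_sigma_O [simp]: "space (sigma_O \<Omega> X R) = \<Omega>"
  by (simp add: sigma_O_def space_gen_sigma)

lemma measurable_sigma_O_generators:
  fixes X R :: "'w \<Rightarrow> real \<Rightarrow> real ^ 'd::finite"
  assumes R: "\<And>\<omega>. \<omega> \<in> \<Omega> \<Longrightarrow> R \<omega> \<in> cadlag_paths S"
  shows "(\<lambda>\<omega>. R \<omega> t) \<in> borel_measurable (sigma_O \<Omega> X R)"
    and "(\<lambda>\<omega>. R \<omega> t * X \<omega> t) \<in> borel_measurable (sigma_O \<Omega> X R)"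
proof -
  have "(\<lambda>\<omega>. R \<omega> t) \<in> borel_measurable (sigma_O \<Omega> X R) \<and>
      (\<lambda>\<omega>. R \<omega> t * X \<omega> t) \<in> borel_measurable (sigma_O \<Omega> X R)"
  proof (cases "0 \<le> t")
    case True
    then show ?thesis unfolding sigma_O_def by (intro conjI measurable_gen_sigma) blast+
  next
    case False
    have R0: "R \<omega> t = 0" if "\<omega> \<in> space (sigma_O \<Omega> X R)" for \<omega>
      using R[of \<omega>] that False by (simp add: cadlag_paths_def)
    have "(\<lambda>\<omega>. R \<omega> t) \<in> borel_measurable (sigma_O \<Omega> X R) \<longleftrightarrow>
        (\<lambda>_. 0 :: real ^ 'd) \<in> borel_measurable (sigma_O \<Omega> X R)"
      by (rule measurable_cong) (simp add: R0)
    moreover have "(\<lambda>\<omega>. R \<omega> t * X \<omega> t) \<in> borel_measurable (sigma_O \<Omega> X R) \<longleftrightarrow>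
        (\<lambda>_. 0 :: real ^ 'd) \<in> borel_measurable (sigma_O \<Omega> X R)"
      by (rule measurable_cong) (simp add: R0)
    ultimately show ?thesis by simp
  qed
  then show "(\<lambda>\<omega>. R \<omega> t) \<in> borel_measurable (sigma_O \<Omega> X R)"
    and "(\<lambda>\<omega>. R \<omega> t * X \<omega> t) \<in> borel_measurable (sigma_O \<Omega> X R)" by simp_all
qed

locale cadlag_coarsening =
  fixes \<Omega> :: "'w set" and X R :: "'w \<Rightarrow> real \<Rightarrow> real ^ 'd::finite"
  assumes paths: "\<And>\<omega>. \<omega> \<in> \<Omega> \<Longrightarrow> X \<omega> \<in> cadlag_paths UNIV \<and> R \<omega> \<in> cadlag_paths binvals"
begin

lemma RX_in_space_RX_paths: "\<omega> \<in> \<Omega> \<Longrightarrow> (R \<omega>, X \<omega>) \<in> space RX_paths"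
  using paths by (simp add: space_RX_paths)

lemma measurable_observation:
  "(\<lambda>\<omega>. coarsen (R \<omega>, X \<omega>)) \<in> measurable (sigma_O \<Omega> X R) RX_paths"
proof -
  have in_space: "coarsen (R \<omega>, X \<omega>) \<in> space RX_paths" if "\<omega> \<in> space (sigma_O \<Omega> X R)" for \<omega>
    using that by (simp add: coarsen_in_space_RX_paths[OF RX_in_space_RX_paths, simplified])
  have "R \<in> measurable (sigma_O \<Omega> X R) (path_space binvals)"
    using in_space paths
    by (intro measurable_path_space measurable_sigma_O_generators) (auto simp: space_RX_paths)
  moreover have "(\<lambda>\<omega> t. R \<omega> t * X \<omega> t) \<in> measurable (sigma_O \<Omega> X R) (path_space UNIV)"
    using in_space paths
    by (intro measurable_path_space measurable_sigma_O_generators) (auto simp: space_RX_paths)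
  ultimately show ?thesis by simp
qed

lemma sets_sigma_O_eq_vimage_algebra:
  "sets (sigma_O \<Omega> X R) = sets (vimage_algebra \<Omega> (\<lambda>\<omega>. coarsen (R \<omega>, X \<omega>)) RX_paths)"
    (is "_ = sets ?V")
proof
  let ?T = "\<lambda>\<omega>. coarsen (R \<omega>, X \<omega>)"
  have T: "?T \<in> measurable (sigma_O \<Omega> X R) RX_paths"
    by (rule measurable_observation)
  have T_space: "?T \<in> \<Omega> \<rightarrow> space RX_paths"
    using measurable_space[OF T] by simp
  have "{f -` A \<inter> \<Omega> | f A. f \<in> {(\<lambda>\<omega>. R \<omega> t * X \<omega> t) | t. 0 \<le> t} \<union> {(\<lambda>\<omega>. R \<omega> t) | t. 0 \<le> t}
      \<and> A \<in> sets borel} \<subseteq> sets ?V"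
  proof safe
    fix t :: real and A :: "(real ^ 'd) set"
    assume A: "A \<in> sets borel"
    have snd_A: "{p \<in> space RX_paths. snd p t \<in> A} \<in> sets RX_paths"
      using measurable_RX_paths_coord(2) A by measurable
    have snd_eq: "(\<lambda>\<omega>. R \<omega> t * X \<omega> t) -` A \<inter> \<Omega> = ?T -` {p \<in> space RX_paths. snd p t \<in> A} \<inter> \<Omega>"
      using T_space by auto
    show "(\<lambda>\<omega>. R \<omega> t * X \<omega> t) -` A \<inter> \<Omega> \<in> sets ?V"
      unfolding snd_eq by (rule in_vimage_algebra[OF snd_A])
    have fst_A: "{p \<in> space RX_paths. fst p t \<in> A} \<in> sets RX_paths"
      using measurable_RX_paths_coord(1) A by measurable
    have fst_eq: "(\<lambda>\<omega>. R \<omega> t) -` A \<inter> \<Omega> = ?T -` {p \<in> space RX_paths. fst p t \<in> A} \<inter> \<Omega>"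
      using T_space by auto
    show "(\<lambda>\<omega>. R \<omega> t) -` A \<inter> \<Omega> \<in> sets ?V"
      unfolding fst_eq by (rule in_vimage_algebra[OF fst_A])
  qed
  from sets.sigma_sets_subset[OF this]
  show "sets (sigma_O \<Omega> X R) \<subseteq> sets ?V"
    by (simp add: sigma_O_def sets_gen_sigma)
  show "sets ?V \<subseteq> sets (sigma_O \<Omega> X R)"
  proof
    fix B assume "B \<in> sets ?V"
    then obtain A where "A \<in> sets RX_paths" "B = ?T -` A \<inter> \<Omega>"
      unfolding sets_vimage_algebra2[OF T_space] by blast
    then show "B \<in> sets (sigma_O \<Omega> X R)"
      using measurable_sets[OF T, of A] by simp
  qed
qed

lemma borel_measurable_sigma_O_iff:
  fixes f :: "'w \<Rightarrow> real"
  shows "f \<in> borel_measurable (sigma_O \<Omega> X R) \<longleftrightarrow>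
    (\<exists>g \<in> borel_measurable RX_paths. (\<forall>\<omega>\<in>\<Omega>. f \<omega> = g (R \<omega>, X \<omega>)) \<and> depends_on_observed g)"
proof
  let ?T = "\<lambda>\<omega>. coarsen (R \<omega>, X \<omega>)"
  have T: "?T \<in> measurable (sigma_O \<Omega> X R) RX_paths"
    by (rule measurable_observation)
  {
    assume "f \<in> borel_measurable (sigma_O \<Omega> X R)"
    then have "f \<in> borel_measurable (vimage_algebra \<Omega> ?T RX_paths)"
      by (simp add: measurable_cong_sets[OF sets_sigma_O_eq_vimage_algebra])
    moreover have "?T \<in> \<Omega> \<rightarrow> space RX_paths"
      using measurable_space[OF T] by simp
    ultimately obtain h where h: "h \<in> borel_measurable RX_paths" "\<forall>\<omega>\<in>\<Omega>. f \<omega> = h (?T \<omega>)"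
      using vimage_algebra_factor_real by blast
    show "\<exists>g \<in> borel_measurable RX_paths.
        (\<forall>\<omega>\<in>\<Omega>. f \<omega> = g (R \<omega>, X \<omega>)) \<and> depends_on_observed g"
    proof (intro bexI conjI)
      show "h \<circ> coarsen \<in> borel_measurable RX_paths"
        using measurable_coarsen h(1) by (rule measurable_comp)
      show "\<forall>\<omega>\<in>\<Omega>. f \<omega> = (h \<circ> coarsen) (R \<omega>, X \<omega>)"
        using h(2) by simp
      show "depends_on_observed (h \<circ> coarsen)"
        by (simp add: depends_on_observed_iff_coarsen space_RX_paths coarsen_idem)
    qed
  next
    assume "\<exists>g \<in> borel_measurable RX_paths. (\<forall>\<omega>\<in>\<Omega>. f \<omega> = g (R \<omega>, X \<omega>)) \<and> depends_on_observed g"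
    then obtain g where g: "g \<in> borel_measurable RX_paths" "\<forall>\<omega>\<in>\<Omega>. f \<omega> = g (R \<omega>, X \<omega>)"
      and g_coarsen: "\<forall>p \<in> space RX_paths. g (coarsen p) = g p"
      by (auto simp: depends_on_observed_iff_coarsen)
    have "f \<omega> = g (?T \<omega>)" if "\<omega> \<in> \<Omega>" for \<omega>
      using g(2) g_coarsen[rule_format, OF RX_in_space_RX_paths[OF that]] that by (simp del: coarsen_Pair)
    then have "f \<in> borel_measurable (sigma_O \<Omega> X R) \<longleftrightarrow>
        (\<lambda>\<omega>. g (?T \<omega>)) \<in> borel_measurable (sigma_O \<Omega> X R)"
      by (intro measurable_cong) simp
    moreover have "(\<lambda>\<omega>. g (?T \<omega>)) \<in> borel_measurable (sigma_O \<Omega> X R)"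
      using measurable_comp[OF T g(1)] by (simp add: comp_def)
    ultimately show "f \<in> borel_measurable (sigma_O \<Omega> X R)" by simp
  }
qed

lemma AE_eq_borel_measurable_sigma_O_iff:
  fixes L :: "'w \<Rightarrow> real"
  assumes space_M: "space M = \<Omega>"
  shows "(\<exists>f \<in> borel_measurable (sigma_O \<Omega> X R). AE \<omega> in M. L \<omega> = f \<omega>) \<longleftrightarrow>
    (\<exists>g \<in> borel_measurable RX_paths. (AE \<omega> in M. L \<omega> = g (R \<omega>, X \<omega>)) \<and> depends_on_observed g)"
proof
  assume "\<exists>f \<in> borel_measurable (sigma_O \<Omega> X R). AE \<omega> in M. L \<omega> = f \<omega>"
  then obtain f where f: "f \<in> borel_measurable (sigma_O \<Omega> X R)" and L_f: "AE \<omega> in M. L \<omega> = f \<omega>"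
    by blast
  obtain g where g: "g \<in> borel_measurable RX_paths"
    "\<forall>\<omega>\<in>\<Omega>. f \<omega> = g (R \<omega>, X \<omega>)" "depends_on_observed g"
    using borel_measurable_sigma_O_iff[THEN iffD1, OF f] by blast
  have "AE \<omega> in M. L \<omega> = g (R \<omega>, X \<omega>)"
    using L_f AE_space by eventually_elim (use g(2) space_M in simp)
  with g show "\<exists>g \<in> borel_measurable RX_paths.
      (AE \<omega> in M. L \<omega> = g (R \<omega>, X \<omega>)) \<and> depends_on_observed g"
    by blast
next
  assume "\<exists>g \<in> borel_measurable RX_paths.
      (AE \<omega> in M. L \<omega> = g (R \<omega>, X \<omega>)) \<and> depends_on_observed g"
  then obtain g where g: "g \<in> borel_measurable RX_paths" "depends_on_observed g"
    and L_g: "AE \<omega> in M. L \<omega> = g (R \<omega>, X \<omega>)" by blast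
  have "(\<lambda>\<omega>. g (R \<omega>, X \<omega>)) \<in> borel_measurable (sigma_O \<Omega> X R)"
    using g by (intro borel_measurable_sigma_O_iff[THEN iffD2] bexI[of _ g] conjI) auto
  with L_g show "\<exists>f \<in> borel_measurable (sigma_O \<Omega> X R). AE \<omega> in M. L \<omega> = f \<omega>"
    by (intro bexI[where x="\<lambda>\<omega>. g (R \<omega>, X \<omega>)"])
qed

end

theorem theorem1:
  fixes \<Omega> :: "'w set"
    and X R :: "'w \<Rightarrow> real \<Rightarrow> real ^ 'd::finite"
    and P :: "'th \<Rightarrow> 'ps \<Rightarrow> 'w measure"
    and \<theta>0 :: 'th and \<psi>0 :: 'ps
  assumes paths: "\<And>\<omega>. \<omega> \<in> \<Omega> \<Longrightarrow> X \<omega> \<in> cadlag_paths UNIV \<and> R \<omega> \<in> cadlag_paths binvals"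
    and space_P: "\<And>\<theta> \<psi>. space (P \<theta> \<psi>) = \<Omega>"
    and sets_P: "\<And>\<theta> \<psi>. sets (P \<theta> \<psi>) = sets (sigma_F \<Omega> X R)"
    and prob_P: "\<And>\<theta> \<psi>. prob_space (P \<theta> \<psi>)"
    and equiv_P: "\<And>\<theta> \<psi> \<theta>' \<psi>'. absolutely_continuous (P \<theta> \<psi>) (P \<theta>' \<psi>')"
    and X_marginal: "\<And>\<theta> \<psi> \<psi>' A. A \<in> sets (sigma_X \<Omega> X) \<Longrightarrow>
                        measure (P \<theta> \<psi>) A = measure (P \<theta> \<psi>') A"
    and non_informative: "\<And>\<theta>1 \<theta>2 \<psi> A. A \<in> sets (sigma_R \<Omega> R) \<Longrightarrow>
        AE \<omega> in P \<theta>1 \<psi>. real_cond_exp (P \<theta>1 \<psi>) (sigma_X \<Omega> X) (indicator A) \<omega>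
                        = real_cond_exp (P \<theta>2 \<psi>) (sigma_X \<Omega> X) (indicator A) \<omega>"
  shows "(\<forall>\<theta> \<psi>. \<exists>f \<in> borel_measurable (sigma_O \<Omega> X R).
            AE \<omega> in P \<theta>0 \<psi>0.
              cond_lik_ratio (P \<theta> \<psi>) (P \<theta>0 \<psi>0) (sigma_X \<Omega> X) (sigma_F \<Omega> X R) \<omega> = f \<omega>)
     \<longleftrightarrow>
         (\<forall>\<theta> \<psi>. \<exists>g \<in> borel_measurable (path_space binvals \<Otimes>\<^sub>M path_space UNIV).
            (AE \<omega> in P \<theta>0 \<psi>0.
              cond_lik_ratio (P \<theta> \<psi>) (P \<theta>0 \<psi>0) (sigma_X \<Omega> X) (sigma_F \<Omega> X R) \<omega> = g (R \<omega>, X \<omega>))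
            \<and> (\<forall>r \<in> cadlag_paths binvals. \<forall>x \<in> cadlag_paths UNIV. \<forall>x' \<in> cadlag_paths UNIV.
                  (\<forall>t\<ge>0. r t * x t = r t * x' t) \<longrightarrow> g (r, x) = g (r, x')))"
proof -
  interpret cadlag_coarsening \<Omega> X R
    using paths by unfold_locales
  show ?thesis
    using AE_eq_borel_measurable_sigma_O_iff[OF space_P]
    unfolding depends_on_observed_def by blast
qed

end
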